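(* Let $G$ be a finite group, $\varphi,\psi\in\mathrm{Aut}(G)$, and $U,V\leq G\times G$ with $\Delta(G,\varphi)\leq U$ and $\Delta(G,\psi)\leq V$. Then (i) $k_2(U)=\varphi(k_1(U))$; (ii) $k_1(U\ast V)=k_1(U)\,\varphi^{-1}(k_1(V))$; (iii) $k_2(U\ast V)=k_2(V)\,\psi(k_2(U))$.
   Context: $\Delta(G,\varphi)=\{(g,\varphi(g)):g\in G\}$. For $W\leq G\times G$: $p_1(W)=\{g:\exists h,(g,h)\in W\}$, $p_2(W)=\{h:\exists g,(g,h)\in W\}$, $k_1(W)=\{g:(g,1)\in W\}$, $k_2(W)=\{h:(1,h)\in W\}$. The $\ast$-product of $U,V\leq G\times G$ is $U\ast V=\{(u,v)\in p_1(U)\times p_2(V):\exists x\in p_2(U)\cap p_1(V),\ (u,x)\in U,\ (x,v)\in V\}$. *)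

theory Defs
  imports "HOL-Algebra.Algebra"
begin

definition p1 :: "('a \<times> 'b) set \<Rightarrow> 'a set" where
  "p1 W = {g. \<exists>h. (g, h) \<in> W}"
definition p2 :: "('a \<times> 'b) set \<Rightarrow> 'b set" where
  "p2 W = {h. \<exists>g. (g, h) \<in> W}"
definition k1 :: "('a, 'm) monoid_scheme \<Rightarrow> ('a \<times> 'a) set \<Rightarrow> 'a set" where
  "k1 G W = {g. (g, \<one>\<^bsub>G\<^esub>) \<in> W}"
definition k2 :: "('a, 'm) monoid_scheme \<Rightarrow> ('a \<times> 'a) set \<Rightarrow> 'a set" where
  "k2 G W = {h. (\<one>\<^bsub>G\<^esub>, h) \<in> W}"

definition Delta :: "('a, 'm) monoid_scheme \<Rightarrow> ('a \<Rightarrow> 'a) \<Rightarrow> ('a \<times> 'a) set" where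
  "Delta G \<phi> = {(g, \<phi> g) | g. g \<in> carrier G}"

definition star_prod :: "('a \<times> 'a) set \<Rightarrow> ('a \<times> 'a) set \<Rightarrow> ('a \<times> 'a) set" where
  "star_prod U V = {(u, v). u \<in> p1 U \<and> v \<in> p2 V \<and>
      (\<exists>x \<in> p2 U \<inter> p1 V. (u, x) \<in> U \<and> (x, v) \<in> V)}"

end

theory Submission
  imports Defs
begin

text \<open>Two pairs of a subgroup \<open>U \<le> G \<times> G\<close> with the same second (first) coordinate differ by an
  element of \<open>k\<^sub>1(U)\<close> (\<open>k\<^sub>2(U)\<close>), so the fibres of \<open>U\<close> are right cosets of the kernels. Every
  element of \<open>k\<^sub>1(U \<ast> V)\<close> is a first coordinate over some \<open>x \<in> k\<^sub>1(V)\<close>; when \<open>\<Delta>(G,\<phi>) \<le> U\<close> the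
  pair \<open>(\<phi>\<^sup>-\<^sup>1 x, x)\<close> lies in \<open>U\<close>, so that fibre is the coset \<open>k\<^sub>1(U) \<phi>\<^sup>-\<^sup>1(x)\<close>; symmetrically for
  \<open>k\<^sub>2\<close>.\<close>

lemma set_mult_eq_UN_rcos: "H <#>\<^bsub>G\<^esub> S = (\<Union>s\<in>S. H #>\<^bsub>G\<^esub> s)"
  unfolding set_mult_def r_coset_def by blast

lemma k1_star_prod: "k1 G (star_prod U V) = {u. \<exists>x \<in> k1 G V. (u, x) \<in> U}"
  unfolding k1_def star_prod_def p1_def p2_def by blast

lemma k2_star_prod: "k2 G (star_prod U V) = {v. \<exists>x \<in> k2 G U. (x, v) \<in> V}"
  unfolding k2_def star_prod_def p1_def p2_def by blast

lemma Delta_subsetD: "Delta G \<phi> \<subseteq> U \<Longrightarrow> g \<in> carrier G \<Longrightarrow> (g, \<phi> g) \<in> U"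
  unfolding Delta_def by blast

locale square_subgroup = group G for G (structure) +
  fixes U :: "('a \<times> 'a) set"
  assumes subgroup_square: "subgroup U (G \<times>\<times> G)"
begin

lemma pair_closed:
  assumes "(a, b) \<in> U"
  shows "a \<in> carrier G" "b \<in> carrier G"
  using subgroup.subset[OF subgroup_square] assms by auto

lemma pair_mult_closed:
  assumes "(a, b) \<in> U" "(c, d) \<in> U"
  shows "(a \<otimes> c, b \<otimes> d) \<in> U"
  using subgroup.m_closed[OF subgroup_square assms] by simp

lemma pair_inv_closed:
  assumes "(a, b) \<in> U"
  shows "(inv a, inv b) \<in> U"
  using subgroup.m_inv_closed[OF subgroup_square assms] pair_closed[OF assms]
  by (simp add: inv_DirProd[OF is_group is_group])

lemma k1_subset_carrier: "k1 G U \<subseteq> carrier G"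
  unfolding k1_def using pair_closed by blast

lemma k2_subset_carrier: "k2 G U \<subseteq> carrier G"
  unfolding k2_def using pair_closed by blast

lemma k1_iff_k2:
  assumes gh: "(g, h) \<in> U"
  shows "g \<in> k1 G U \<longleftrightarrow> h \<in> k2 G U"
proof
  assume "g \<in> k1 G U"
  then have "(inv g \<otimes> g, inv \<one> \<otimes> h) \<in> U"
    using pair_mult_closed[OF pair_inv_closed gh] by (simp only: k1_def mem_Collect_eq)
  then show "h \<in> k2 G U"
    using pair_closed[OF gh] by (simp add: k2_def)
next
  assume "h \<in> k2 G U"
  then have "(g \<otimes> inv \<one>, h \<otimes> inv h) \<in> U"
    using pair_mult_closed[OF gh pair_inv_closed] by (simp only: k2_def mem_Collect_eq)
  then show "g \<in> k1 G U"
    using pair_closed[OF gh] by (simp add: k1_def)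
qed

lemma fst_fibre_eq_rcos:
  assumes gh: "(g, h) \<in> U"
  shows "{u. (u, h) \<in> U} = k1 G U #> g"
proof (intro equalityI subsetI)
  fix u
  assume "u \<in> {u. (u, h) \<in> U}"
  then have uh: "(u, h) \<in> U" by simp
  have "(u \<otimes> inv g, h \<otimes> inv h) \<in> U"
    using pair_mult_closed[OF uh pair_inv_closed[OF gh]] .
  then have "u \<otimes> inv g \<in> k1 G U"
    using pair_closed[OF gh] by (simp add: k1_def)
  moreover have "u = u \<otimes> inv g \<otimes> g"
    using pair_closed[OF gh] pair_closed[OF uh] by (simp add: m_assoc)
  ultimately show "u \<in> k1 G U #> g"
    unfolding r_coset_def by blast
next
  fix u
  assume "u \<in> k1 G U #> g"
  then obtain k where "(k, \<one>) \<in> U" and "u = k \<otimes> g"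
    unfolding r_coset_def k1_def by blast
  then show "u \<in> {u. (u, h) \<in> U}"
    using pair_mult_closed[OF _ gh] pair_closed[OF gh] by force
qed

lemma snd_fibre_eq_rcos:
  assumes gh: "(g, h) \<in> U"
  shows "{v. (g, v) \<in> U} = k2 G U #> h"
proof (intro equalityI subsetI)
  fix v
  assume "v \<in> {v. (g, v) \<in> U}"
  then have gv: "(g, v) \<in> U" by simp
  have "(g \<otimes> inv g, v \<otimes> inv h) \<in> U"
    using pair_mult_closed[OF gv pair_inv_closed[OF gh]] .
  then have "v \<otimes> inv h \<in> k2 G U"
    using pair_closed[OF gh] by (simp add: k2_def)
  moreover have "v = v \<otimes> inv h \<otimes> h"
    using pair_closed[OF gh] pair_closed[OF gv] by (simp add: m_assoc)
  ultimately show "v \<in> k2 G U #> h"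
    unfolding r_coset_def by blast
next
  fix v
  assume "v \<in> k2 G U #> h"
  then obtain k where "(\<one>, k) \<in> U" and "v = k \<otimes> h"
    unfolding r_coset_def k2_def by blast
  then show "v \<in> {v. (g, v) \<in> U}"
    using pair_mult_closed[OF _ gh] pair_closed[OF gh] by force
qed

lemma k2_eq_image_k1:
  assumes "Delta G \<phi> \<subseteq> U" and "\<phi> ` carrier G = carrier G"
  shows "k2 G U = \<phi> ` k1 G U"
proof (intro equalityI subsetI)
  fix h
  assume h: "h \<in> k2 G U"
  then obtain g where g: "g \<in> carrier G" and "h = \<phi> g"
    using k2_subset_carrier assms(2) by blast
  then show "h \<in> \<phi> ` k1 G U"
    using h k1_iff_k2[OF Delta_subsetD[OF assms(1) g]] by blast
next
  fix h
  assume "h \<in> \<phi> ` k1 G U"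
  then show "h \<in> k2 G U"
    using k1_iff_k2[OF Delta_subsetD[OF assms(1)]] k1_subset_carrier by blast
qed

end

lemma k1_star_prod_twisted:
  assumes "square_subgroup G U" "square_subgroup G V"
    and "Delta G \<phi> \<subseteq> U" and "\<phi> ` carrier G = carrier G"
  shows "k1 G (star_prod U V) = k1 G U <#>\<^bsub>G\<^esub> (inv_into (carrier G) \<phi> ` k1 G V)"
proof -
  interpret U: square_subgroup G U by fact
  interpret V: square_subgroup G V by fact
  have "{u. (u, x) \<in> U} = k1 G U #>\<^bsub>G\<^esub> inv_into (carrier G) \<phi> x" if "x \<in> k1 G V" for x
  proof -
    have x: "x \<in> \<phi> ` carrier G"
      using that V.k1_subset_carrier assms(4) by blast
    have "(inv_into (carrier G) \<phi> x, x) \<in> U"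
      using Delta_subsetD[OF assms(3) inv_into_into[OF x]] f_inv_into_f[OF x] by simp
    then show ?thesis
      by (rule U.fst_fibre_eq_rcos)
  qed
  then show ?thesis
    by (auto simp: k1_star_prod set_mult_eq_UN_rcos)
qed

lemma k2_star_prod_twisted:
  assumes "square_subgroup G U" "square_subgroup G V" and "Delta G \<psi> \<subseteq> V"
  shows "k2 G (star_prod U V) = k2 G V <#>\<^bsub>G\<^esub> (\<psi> ` k2 G U)"
proof -
  interpret U: square_subgroup G U by fact
  interpret V: square_subgroup G V by fact
  have "{v. (x, v) \<in> V} = k2 G V #>\<^bsub>G\<^esub> \<psi> x" if "x \<in> k2 G U" for x
    using that U.k2_subset_carrier by (intro V.snd_fibre_eq_rcos Delta_subsetD[OF assms(3)]) blast
  then show ?thesis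
    by (auto simp: k2_star_prod set_mult_eq_UN_rcos)
qed

theorem lemma5p4:
  fixes G :: "('a, 'm) monoid_scheme"
    and \<phi> \<psi> :: "'a \<Rightarrow> 'a"
    and U V :: "('a \<times> 'a) set"
  assumes "group G"
    and "finite (carrier G)"
    and "\<phi> \<in> iso G G"
    and "\<psi> \<in> iso G G"
    and "subgroup U (G \<times>\<times> G)"
    and "subgroup V (G \<times>\<times> G)"
    and "Delta G \<phi> \<subseteq> U"
    and "Delta G \<psi> \<subseteq> V"
  shows "k2 G U = \<phi> ` k1 G U \<and>
    k1 G (star_prod U V) = k1 G U <#>\<^bsub>G\<^esub> (inv_into (carrier G) \<phi> ` k1 G V) \<and>
    k2 G (star_prod U V) = k2 G V <#>\<^bsub>G\<^esub> (\<psi> ` k2 G U)"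
proof -
  have U: "square_subgroup G U" and V: "square_subgroup G V"
    using assms(1,5,6) by (simp_all add: square_subgroup_def square_subgroup_axioms_def)
  have "\<phi> ` carrier G = carrier G"
    using assms(3) by (simp add: iso_def bij_betw_def)
  then show ?thesis
    using square_subgroup.k2_eq_image_k1[OF U assms(7)]
      k1_star_prod_twisted[OF U V assms(7)] k2_star_prod_twisted[OF U V assms(8)]
    by blast
qed

end
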